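(* For every function $f:\mathcal X\times\mathcal Y\to\mathcal Z$ and $\epsilon,\delta\in(0,1)$, $\mathrm{srec}_{\epsilon,\delta}(f)=\max_\mu \mathrm{srec}^\mu_{\epsilon,\delta}(f)$, where the maximum is over probability distributions $\mu$ on $\mathcal X\times\mathcal Y$.
   Context: A rectangle is $A\times B$ with $A\subseteq\mathcal X,B\subseteq\mathcal Y$. For $z\in\mathcal Z$, $\mathrm{srec}^z_{\epsilon,\delta}(f)$ is the optimal value of the LP: minimize $\sum_R w_R$ over $w_R\ge 0$ (one variable per rectangle $R$) subject to $\sum_{R\ni(x,y)}w_R\ge1-\epsilon$ for all $(x,y)\in f^{-1}(z)$; $\sum_{R\ni(x,y)}w_R\le\delta$ for all $(x,y)\notin f^{-1}(z)$; $\sum_{R\ni(x,y)}w_R\le1$ for all $(x,y)$. $\mathrm{srec}_{\epsilon,\delta}(f)=\max_z\mathrm{srec}^z_{\epsilon,\delta}(f)$. For a nonnegative function $\mu$ on $\mathcal X\times\mathcal Y$, write $\mu_z(R)=\mu(R\cap f^{-1}(z))$ and $\mu_z=\mu_z(\mathcal X\times\mathcal Y)$. $\mathrm{srec}^{z,\mu}_{\epsilon,\delta}(f)$ is the optimal value of the LP: minimize $\sum_R w_R$ over $w_R\ge0$ subject to the covering constraint $\sum_{(x,y)\in f^{-1}(z)}\mu(x,y)\sum_{R\ni(x,y)}w_R\ge(1-\epsilon)\mu_z$, the packing constraints $\sum_{R\ni(x,y)}w_R\le\delta$ for all $(x,y)\notin f^{-1}(z)$, and $\sum_{R\ni(x,y)}w_R\le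 1$ for all $(x,y)$. $\mathrm{srec}^\mu_{\epsilon,\delta}(f)=\max_z\mathrm{srec}^{z,\mu}_{\epsilon,\delta}(f)$. *)

theory Defs
  imports Complex_Main
begin

definition rects :: "('x \<times> 'y) set set" where
  "rects = {A \<times> B | A B. True}"

definition cov :: "(('x \<times> 'y) set \<Rightarrow> real) \<Rightarrow> 'x \<times> 'y \<Rightarrow> real" where
  "cov w p = (\<Sum>R\<in>{R\<in>rects. p \<in> R}. w R)"

definition srec_feasible ::
  "real \<Rightarrow> real \<Rightarrow> ('x \<times> 'y \<Rightarrow> 'z) \<Rightarrow> 'z \<Rightarrow> (('x \<times> 'y) set \<Rightarrow> real) \<Rightarrow> bool" where
  "srec_feasible eps delta f z w \<longleftrightarrow>
     (\<forall>R\<in>rects. 0 \<le> w R) \<and>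
     (\<forall>p. f p = z \<longrightarrow> 1 - eps \<le> cov w p) \<and>
     (\<forall>p. f p \<noteq> z \<longrightarrow> cov w p \<le> delta) \<and>
     (\<forall>p. cov w p \<le> 1)"

definition srec_z :: "real \<Rightarrow> real \<Rightarrow> ('x \<times> 'y \<Rightarrow> 'z) \<Rightarrow> 'z \<Rightarrow> real" where
  "srec_z eps delta f z = Inf {(\<Sum>R\<in>rects. w R) | w. srec_feasible eps delta f z w}"

definition srec :: "real \<Rightarrow> real \<Rightarrow> ('x \<times> 'y \<Rightarrow> 'z) \<Rightarrow> real" where
  "srec eps delta f = Sup (range (\<lambda>z. srec_z eps delta f z))"

definition mu_z :: "('x \<times> 'y \<Rightarrow> real) \<Rightarrow> ('x \<times> 'y \<Rightarrow> 'z) \<Rightarrow> 'z \<Rightarrow> real" where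
  "mu_z \<mu> f z = (\<Sum>p\<in>{p. f p = z}. \<mu> p)"

definition srec_mu_feasible ::
  "real \<Rightarrow> real \<Rightarrow> ('x \<times> 'y \<Rightarrow> real) \<Rightarrow> ('x \<times> 'y \<Rightarrow> 'z) \<Rightarrow> 'z \<Rightarrow> (('x \<times> 'y) set \<Rightarrow> real) \<Rightarrow> bool" where
  "srec_mu_feasible eps delta \<mu> f z w \<longleftrightarrow>
     (\<forall>R\<in>rects. 0 \<le> w R) \<and>
     (1 - eps) * mu_z \<mu> f z \<le> (\<Sum>p\<in>{p. f p = z}. \<mu> p * cov w p) \<and>
     (\<forall>p. f p \<noteq> z \<longrightarrow> cov w p \<le> delta) \<and>
     (\<forall>p. cov w p \<le> 1)"

definition srec_z_mu :: "real \<Rightarrow> real \<Rightarrow> ('x \<times> 'y \<Rightarrow> real) \<Rightarrow> ('x \<times> 'y \<Rightarrow> 'z) \<Rightarrow> 'z \<Rightarrow> real" where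
  "srec_z_mu eps delta \<mu> f z = Inf {(\<Sum>R\<in>rects. w R) | w. srec_mu_feasible eps delta \<mu> f z w}"

definition srec_mu :: "real \<Rightarrow> real \<Rightarrow> ('x \<times> 'y \<Rightarrow> real) \<Rightarrow> ('x \<times> 'y \<Rightarrow> 'z) \<Rightarrow> real" where
  "srec_mu eps delta \<mu> f = Sup (range (\<lambda>z. srec_z_mu eps delta \<mu> f z))"

definition prob_dist :: "('a::finite \<Rightarrow> real) \<Rightarrow> bool" where
  "prob_dist \<mu> \<longleftrightarrow> (\<forall>p. 0 \<le> \<mu> p) \<and> (\<Sum>p\<in>UNIV. \<mu> p) = 1"

end

theory Submission
  imports Defs "HOL-Analysis.Analysis"
begin

text \<open>
  The inequality \<open>srec\<^sup>\<mu> \<le> srec\<close> holds because pointwise covering implies covering on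
  \<open>\<mu>\<close>-average. For the converse fix the maximising \<open>z\<close> and let \<open>opt = srec\<^sup>z\<close>. The coverage
  vectors of the packing-feasible weightings of total weight below \<open>opt\<close> form a convex set
  disjoint from the convex orthant \<open>{v. \<forall>p\<in>f\<^sup>-\<^sup>1(z). 1 - \<epsilon> \<le> v p}\<close>. A separating hyperplane
  has a nonnegative normal supported on \<open>f\<^sup>-\<^sup>1(z)\<close>; normalised, it is the distribution \<open>\<mu>\<close>.
  Mixing a little of the trivial cover of \<open>f\<^sup>-\<^sup>1(z)\<close> into a cheap weighting shows that no
  weighting of weight below \<open>opt\<close> satisfies the averaged covering constraint for \<open>\<mu>\<close>.
\<close>

definition srec_packing :: "real \<Rightarrow> ('x \<times> 'y \<Rightarrow> 'z) \<Rightarrow> 'z \<Rightarrow> (('x \<times> 'y) set \<Rightarrow> real) \<Rightarrow> bool" where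
  "srec_packing delta f z w \<longleftrightarrow>
     (\<forall>R\<in>rects. 0 \<le> w R) \<and> (\<forall>p. f p \<noteq> z \<longrightarrow> cov w p \<le> delta) \<and> (\<forall>p. cov w p \<le> 1)"

lemma srec_feasible_iff:
  "srec_feasible eps delta f z w \<longleftrightarrow>
     srec_packing delta f z w \<and> (\<forall>p. f p = z \<longrightarrow> 1 - eps \<le> cov w p)"
  unfolding srec_feasible_def srec_packing_def by blast

lemma srec_mu_feasible_iff:
  "srec_mu_feasible eps delta \<mu> f z w \<longleftrightarrow>
     srec_packing delta f z w \<and> (1 - eps) * mu_z \<mu> f z \<le> (\<Sum>p | f p = z. \<mu> p * cov w p)"
  unfolding srec_mu_feasible_def srec_packing_def by blast

lemma finite_rects: "finite (rects :: ('x::finite \<times> 'y::finite) set set)"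
  by (rule finite_subset[of _ UNIV]) auto

lemma singleton_in_rects: "{p} \<in> rects"
  unfolding rects_def by (cases p) auto

lemma cov_linear: "cov (\<lambda>R. s * w R + t * v R) p = s * cov w p + t * cov v p"
  unfolding cov_def by (simp add: sum.distrib sum_distrib_left)

lemma srec_packing_convex:
  assumes "srec_packing delta f z w" "srec_packing delta f z v" "0 \<le> s" "s \<le> 1"
  shows "srec_packing delta f z (\<lambda>R. (1 - s) * w R + s * v R)"
proof -
  have combination_le: "(1 - s) * x + s * y \<le> c" if "x \<le> c" "y \<le> c" for x y c :: real
    using convex_bound_le[OF that, of "1 - s" s] assms(3,4) by simp
  show ?thesis
    using assms unfolding srec_packing_def cov_linear
    by (auto intro!: combination_le)
qed

definition point_cover :: "('x \<times> 'y \<Rightarrow> 'z) \<Rightarrow> 'z \<Rightarrow> ('x \<times> 'y) set \<Rightarrow> real" where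
  "point_cover f z R = (if \<exists>q. f q = z \<and> R = {q} then 1 else 0)"

lemma cov_point_cover:
  "cov (point_cover f z) (p :: 'x::finite \<times> 'y::finite) = (if f p = z then 1 else 0)"
proof -
  have "cov (point_cover f z) p = card {R \<in> rects. p \<in> R \<and> (\<exists>q. f q = z \<and> R = {q})}"
    unfolding cov_def point_cover_def
    by (simp add: sum.If_cases finite_rects Int_def conj_commute)
  also have "{R \<in> rects. p \<in> R \<and> (\<exists>q. f q = z \<and> R = {q})} = (if f p = z then {{p}} else {})"
    using singleton_in_rects[of p] by (cases p) auto
  finally show ?thesis by simp
qed

lemma srec_packing_point_cover:
  "0 \<le> delta \<Longrightarrow> srec_packing delta f z (point_cover f (z :: 'z) :: ('x::finite \<times> 'y::finite) set \<Rightarrow> real)"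
  unfolding srec_packing_def by (auto simp: cov_point_cover point_cover_def)

lemma srec_feasible_point_cover:
  "0 \<le> eps \<Longrightarrow> 0 \<le> delta \<Longrightarrow>
    srec_feasible eps delta f z (point_cover f (z :: 'z) :: ('x::finite \<times> 'y::finite) set \<Rightarrow> real)"
  by (simp add: srec_feasible_iff srec_packing_point_cover cov_point_cover)

lemma srec_feasible_imp_mu_feasible:
  assumes "srec_feasible eps delta f z w" "\<forall>p. 0 \<le> \<mu> p"
  shows "srec_mu_feasible eps delta \<mu> f z w"
proof -
  have "(1 - eps) * mu_z \<mu> f z \<le> (\<Sum>p | f p = z. \<mu> p * cov w p)"
    unfolding mu_z_def sum_distrib_left
    using assms by (intro sum_mono) (auto simp: srec_feasible_iff mult.commute intro: mult_left_mono)
  with assms(1) show ?thesis by (simp add: srec_feasible_iff srec_mu_feasible_iff)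
qed

lemma srec_z_le:
  "srec_feasible eps delta f z w \<Longrightarrow> srec_z eps delta f z \<le> sum w rects"
  unfolding srec_z_def srec_feasible_def
  by (rule cInf_lower) (auto intro!: bdd_belowI[of _ 0] sum_nonneg)

lemma srec_z_mu_greatest:
  fixes f :: "'x::finite \<times> 'y::finite \<Rightarrow> 'z"
  assumes "0 \<le> eps" "0 \<le> delta" "\<forall>p. 0 \<le> \<mu> p"
    and "\<And>w. srec_mu_feasible eps delta \<mu> f z w \<Longrightarrow> c \<le> sum w rects"
  shows "c \<le> srec_z_mu eps delta \<mu> f z"
  unfolding srec_z_mu_def
proof (rule cInf_greatest)
  show "{sum w rects | w. srec_mu_feasible eps delta \<mu> f z w} \<noteq> {}"
    using srec_feasible_imp_mu_feasible[OF srec_feasible_point_cover[OF assms(1,2), of f z] assms(3)]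
    by blast
qed (use assms(4) in blast)

lemma srec_z_mu_le:
  assumes "srec_mu_feasible eps delta \<mu> f z w"
  shows "srec_z_mu eps delta \<mu> f z \<le> sum w rects"
  unfolding srec_z_mu_def
proof (rule cInf_lower)
  show "bdd_below {sum w rects | w. srec_mu_feasible eps delta \<mu> f z w}"
  proof (rule bdd_belowI)
    fix x assume "x \<in> {sum w rects | w. srec_mu_feasible eps delta \<mu> f z w}"
    then show "0 \<le> x"
      by (auto simp: srec_mu_feasible_iff srec_packing_def intro: sum_nonneg)
  qed
qed (use assms in blast)

lemma srec_z_mu_le_srec_z:
  fixes f :: "'x::finite \<times> 'y::finite \<Rightarrow> 'z"
  assumes "0 \<le> eps" "0 \<le> delta" "\<forall>p. 0 \<le> \<mu> p"
  shows "srec_z_mu eps delta \<mu> f z \<le> srec_z eps delta f z"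
  unfolding srec_z_def
proof (rule cInf_greatest)
  show "{sum w rects | w. srec_feasible eps delta f z w} \<noteq> {}"
    using srec_feasible_point_cover[OF assms(1,2), of f z] by blast
next
  fix x assume "x \<in> {sum w rects | w. srec_feasible eps delta f z w}"
  then obtain w where "x = sum w rects" "srec_feasible eps delta f z w" by blast
  then show "srec_z_mu eps delta \<mu> f z \<le> x"
    using srec_z_mu_le[OF srec_feasible_imp_mu_feasible[OF _ assms(3)]] by simp
qed

lemma inner_lower_bound_on_orthant:
  fixes a :: "real ^ 'n"
  assumes bound: "\<And>v. (\<forall>p\<in>Z. c \<le> v $ p) \<Longrightarrow> b \<le> inner a v"
  shows "b \<le> c * (\<Sum>p\<in>UNIV. a $ p)" "0 \<le> a $ p" "p \<notin> Z \<Longrightarrow> a $ p = 0"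
proof -
  define corner :: "real ^ 'n" where "corner = (\<chi> p. c)"
  have inner_corner: "inner a corner = c * (\<Sum>p\<in>UNIV. a $ p)"
    by (simp add: corner_def inner_vec_def sum_distrib_left mult.commute)
  then show corner_bound: "b \<le> c * (\<Sum>p\<in>UNIV. a $ p)"
    using bound[of corner] by (simp add: corner_def)
  text \<open>Moving along the \<open>p\<close>-th axis to a point where the inner product is \<open>b - 1\<close>
    stays inside the orthant unless \<open>p \<in> Z\<close> and \<open>a $ p > 0\<close>.\<close>
  have escape: "p \<in> Z \<and> 0 < a $ p" if "a $ p \<noteq> 0"
  proof (rule ccontr)
    assume outside: "\<not> (p \<in> Z \<and> 0 < a $ p)"
    define t where "t = (b - inner a corner - 1) / a $ p"
    have "p \<in> Z \<Longrightarrow> 0 \<le> t"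
      using outside that corner_bound inner_corner by (auto simp: t_def divide_nonpos_neg)
    then have "b \<le> inner a (corner + t *\<^sub>R axis p 1)"
      by (intro bound) (auto simp: corner_def axis_def)
    also have "\<dots> = b - 1"
      using that by (simp add: inner_add_right inner_axis t_def)
    finally show False by simp
  qed
  show "0 \<le> a $ p" "p \<notin> Z \<Longrightarrow> a $ p = 0"
    using escape by force+
qed

lemma sum_rects_mix:
  "(\<Sum>R\<in>rects. (1 - s) * w R + s * v R) = (1 - s) * sum w rects + s * (sum v rects :: real)"
  by (simp add: sum.distrib sum_distrib_left)

lemma cheap_packings_separated:
  fixes f :: "'x::finite \<times> 'y::finite \<Rightarrow> 'z"
  assumes "0 < eps" "0 \<le> delta" "0 < opt"
    and lower: "\<And>w. srec_feasible eps delta f z w \<Longrightarrow> opt \<le> sum w rects"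
  obtains a :: "'x \<times> 'y \<Rightarrow> real"
  where "\<And>p. 0 \<le> a p" "\<And>p. f p \<noteq> z \<Longrightarrow> a p = 0" "0 < sum a UNIV"
    "\<And>w. srec_packing delta f z w \<Longrightarrow> sum w rects < opt \<Longrightarrow>
       (\<Sum>p\<in>UNIV. a p * cov w p) \<le> (1 - eps) * sum a UNIV"
proof -
  define coverage :: "(('x \<times> 'y) set \<Rightarrow> real) \<Rightarrow> real ^ ('x \<times> 'y)"
    where "coverage w = (\<chi> p. cov w p)" for w
  define cheap where "cheap = coverage ` {w. srec_packing delta f z w \<and> sum w rects < opt}"
  define orthant :: "(real ^ ('x \<times> 'y)) set"
    where "orthant = {v. \<forall>p\<in>{p. f p = z}. 1 - eps \<le> v $ p}"
  have "convex cheap"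
    unfolding convex_alt cheap_def
  proof (clarsimp)
    fix w v and s :: real
    assume w: "srec_packing delta f z w" "sum w rects < opt"
      and v: "srec_packing delta f z v" "sum v rects < opt" and s: "0 \<le> s" "s \<le> 1"
    let ?mix = "\<lambda>R. (1 - s) * w R + s * v R"
    have "srec_packing delta f z ?mix \<and> sum ?mix rects < opt"
      using srec_packing_convex[OF w(1) v(1) s] convex_bound_lt[OF w(2) v(2), of "1 - s" s] s
      by (simp add: sum_rects_mix)
    moreover have "(1 - s) *\<^sub>R coverage w + s *\<^sub>R coverage v = coverage ?mix"
      by (simp add: coverage_def vec_eq_iff cov_linear)
    ultimately show "(1 - s) *\<^sub>R coverage w + s *\<^sub>R coverage v
        \<in> coverage ` {w. srec_packing delta f z w \<and> sum w rects < opt}"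
      by blast
  qed
  moreover have "convex orthant"
  proof (rule convexI)
    fix x y :: "real ^ ('x \<times> 'y)" and u v :: real
    assume "x \<in> orthant" "y \<in> orthant" "0 \<le> u" "0 \<le> v" "u + v = 1"
    then have "u * (1 - eps) + v * (1 - eps) \<le> u * x $ p + v * y $ p" if "f p = z" for p
      using that unfolding orthant_def by (intro add_mono mult_left_mono) blast+
    with \<open>u + v = 1\<close> show "u *\<^sub>R x + v *\<^sub>R y \<in> orthant"
      by (simp add: orthant_def flip: distrib_right)
  qed
  moreover have "cheap \<noteq> {}"
    using \<open>0 < opt\<close> \<open>0 \<le> delta\<close>
    by (auto simp: cheap_def srec_packing_def cov_def intro!: image_eqI[of _ _ "\<lambda>_. 0"])
  moreover have "orthant \<noteq> {}"
    using \<open>0 < eps\<close> by (auto simp: orthant_def intro!: exI[of _ "\<chi> p. 1"])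
  moreover have "cheap \<inter> orthant = {}"
    using lower by (force simp: cheap_def orthant_def coverage_def srec_feasible_iff)
  ultimately obtain a b where "a \<noteq> 0" and below: "\<forall>x\<in>cheap. inner a x \<le> b"
    and above: "\<forall>x\<in>orthant. b \<le> inner a x"
    by (metis separating_hyperplane_sets)
  have orthant_bound: "(\<forall>p\<in>{p. f p = z}. 1 - eps \<le> v $ p) \<Longrightarrow> b \<le> inner a v" for v
    using above by (simp add: orthant_def)
  note normal = inner_lower_bound_on_orthant[where Z = "{p. f p = z}" and c = "1 - eps", OF orthant_bound]
  show thesis
  proof
    show "0 \<le> a $ p" "f p \<noteq> z \<Longrightarrow> a $ p = 0" for p
      using normal(2,3) by auto
    obtain q where "a $ q \<noteq> 0"
      using \<open>a \<noteq> 0\<close> by (metis vec_eq_iff zero_index)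
    with normal(2)[of q] have "0 < a $ q" by linarith
    then show "0 < (\<Sum>p\<in>UNIV. a $ p)"
      using normal(2) by (intro sum_pos2[of UNIV q]) simp_all
    show "(\<Sum>p\<in>UNIV. a $ p * cov w p) \<le> (1 - eps) * (\<Sum>p\<in>UNIV. a $ p)"
      if "srec_packing delta f z w" "sum w rects < opt" for w
    proof -
      have "(\<Sum>p\<in>UNIV. a $ p * cov w p) = inner a (coverage w)"
        by (simp add: coverage_def inner_vec_def)
      also have "\<dots> \<le> b"
        using below that by (auto simp: cheap_def)
      also have "\<dots> \<le> (1 - eps) * (\<Sum>p\<in>UNIV. a $ p)"
        by (rule normal(1))
      finally show ?thesis .
    qed
  qed
qed

lemma sum_weighted_cov_point_cover:
  fixes a :: "'x::finite \<times> 'y::finite \<Rightarrow> real"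
  assumes "\<And>p. f p \<noteq> z \<Longrightarrow> a p = 0"
  shows "(\<Sum>p\<in>UNIV. a p * cov (point_cover f z) p) = sum a UNIV"
  using assms by (intro sum.cong) (auto simp: cov_point_cover)

text \<open>Mixing a small amount of \<open>point_cover\<close>, whose weighted coverage is the full \<open>sum a UNIV\<close>,
  into a cheap packing keeps it cheap; so the weak bound for cheap packings is in fact strict.\<close>
lemma cheap_packing_coverage_strict:
  fixes f :: "'x::finite \<times> 'y::finite \<Rightarrow> 'z"
  assumes "0 < eps" "0 \<le> delta" "\<And>p. f p \<noteq> z \<Longrightarrow> a p = 0" "0 < sum a UNIV"
    and cheap: "\<And>w. srec_packing delta f z w \<Longrightarrow> sum w rects < opt \<Longrightarrow>
       (\<Sum>p\<in>UNIV. a p * cov w p) \<le> (1 - eps) * sum a UNIV"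
    and w: "srec_packing delta f z w" "sum w rects < opt"
  shows "(\<Sum>p\<in>UNIV. a p * cov w p) < (1 - eps) * sum a UNIV"
proof -
  define A where "A = sum a UNIV"
  define gap where "gap = sum (point_cover f z) rects - sum w rects"
  define slack where "slack = opt - sum w rects"
  have "0 < slack" using w(2) by (simp add: slack_def)
  obtain s where s: "0 < s" "s < 1" "s * gap < slack"
  proof
    define s where "s = slack / (\<bar>gap\<bar> + slack + 1)"
    show "0 < s" "s < 1" using \<open>0 < slack\<close> by (simp_all add: s_def)
    have "s * gap \<le> s * \<bar>gap\<bar>" using \<open>0 < s\<close> by (simp add: mult_left_mono)
    also have "\<dots> < slack"
      using \<open>0 < slack\<close> by (simp add: s_def field_simps add_pos_pos)
    finally show "s * gap < slack" .
  qed
  define mix where "mix = (\<lambda>R. (1 - s) * w R + s * point_cover f z R)"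
  have "srec_packing delta f z mix"
    unfolding mix_def using s srec_packing_convex[OF w(1) srec_packing_point_cover] assms(2) by simp
  moreover have "sum mix rects = sum w rects + s * gap"
    unfolding mix_def sum_rects_mix gap_def by (simp add: algebra_simps)
  then have "sum mix rects < opt"
    using s(3) by (simp add: slack_def)
  ultimately have "(\<Sum>p\<in>UNIV. a p * cov mix p) \<le> (1 - eps) * A"
    unfolding A_def by (rule cheap)
  moreover have "(\<Sum>p\<in>UNIV. a p * cov mix p) = (1 - s) * (\<Sum>p\<in>UNIV. a p * cov w p) + s * A"
  proof -
    have "a p * cov mix p = (1 - s) * (a p * cov w p) + s * (a p * cov (point_cover f z) p)" for p
      unfolding mix_def cov_linear by (simp add: algebra_simps)
    then show ?thesis
      using sum_weighted_cov_point_cover[of f z a, OF assms(3)]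
      by (simp add: A_def sum.distrib flip: sum_distrib_left)
  qed
  moreover have "0 < s * eps * A"
    using s assms(1,4) by (simp add: A_def)
  ultimately have "(1 - s) * (\<Sum>p\<in>UNIV. a p * cov w p) < (1 - s) * ((1 - eps) * A)"
    by (simp add: algebra_simps)
  then show ?thesis
    using s(2) by (simp add: A_def)
qed

lemma sum_fibre_eq_sum_UNIV:
  fixes g :: "'a::finite \<Rightarrow> real"
  assumes "\<And>p. f p \<noteq> z \<Longrightarrow> g p = 0"
  shows "(\<Sum>p | f p = z. g p) = sum g UNIV"
  by (rule sum.mono_neutral_left) (use assms in auto)

lemma prob_dist_normalise:
  fixes a :: "'a::finite \<Rightarrow> real"
  assumes "\<And>p. 0 \<le> a p" "0 < sum a UNIV"
  shows "prob_dist (\<lambda>p. a p / sum a UNIV)"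
  using assms by (simp add: prob_dist_def flip: sum_divide_distrib)

lemma srec_z_mu_normalised_ge:
  fixes f :: "'x::finite \<times> 'y::finite \<Rightarrow> 'z"
  assumes "0 < eps" "0 \<le> delta" "\<And>p. 0 \<le> a p" and a_fibre: "\<And>p. f p \<noteq> z \<Longrightarrow> a p = 0"
    and A_pos: "0 < sum a UNIV"
    and cheap: "\<And>w. srec_packing delta f z w \<Longrightarrow> sum w rects < opt \<Longrightarrow>
       (\<Sum>p\<in>UNIV. a p * cov w p) \<le> (1 - eps) * sum a UNIV"
  shows "opt \<le> srec_z_mu eps delta (\<lambda>p. a p / sum a UNIV) f z"
proof -
  define \<mu> where "\<mu> = (\<lambda>p. a p / sum a UNIV)"
  have "prob_dist \<mu>"
    unfolding \<mu>_def using assms(3) A_pos by (rule prob_dist_normalise)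
  then have \<mu>_nonneg: "\<forall>p. 0 \<le> \<mu> p"
    by (simp add: prob_dist_def)
  have "opt \<le> srec_z_mu eps delta \<mu> f z"
  proof (rule srec_z_mu_greatest[OF less_imp_le[OF assms(1)] assms(2) \<mu>_nonneg])
    fix w assume feasible: "srec_mu_feasible eps delta \<mu> f z w"
    have "mu_z \<mu> f z = 1"
      using \<open>prob_dist \<mu>\<close> unfolding mu_z_def prob_dist_def
      by (subst sum_fibre_eq_sum_UNIV) (auto simp: \<mu>_def a_fibre)
    moreover have "(\<Sum>p | f p = z. \<mu> p * cov w p) = (\<Sum>p\<in>UNIV. a p * cov w p) / sum a UNIV"
      by (subst sum_fibre_eq_sum_UNIV) (auto simp: \<mu>_def a_fibre sum_divide_distrib)
    ultimately have "1 - eps \<le> (\<Sum>p\<in>UNIV. a p * cov w p) / sum a UNIV"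
      using feasible by (simp add: srec_mu_feasible_iff)
    then have covered: "(1 - eps) * sum a UNIV \<le> (\<Sum>p\<in>UNIV. a p * cov w p)"
      using A_pos by (simp add: pos_le_divide_eq)
    show "opt \<le> sum w rects"
    proof (rule ccontr)
      assume "\<not> opt \<le> sum w rects"
      moreover have "srec_packing delta f z w"
        using feasible by (simp add: srec_mu_feasible_iff)
      ultimately have "(\<Sum>p\<in>UNIV. a p * cov w p) < (1 - eps) * sum a UNIV"
        by (intro cheap_packing_coverage_strict[OF assms(1,2) a_fibre A_pos cheap]) (simp_all add: not_le)
      with covered show False by linarith
    qed
  qed
  then show ?thesis unfolding \<mu>_def .
qed

lemma srec_z_le_srec_z_mu_for_some_dist:
  fixes f :: "'x::finite \<times> 'y::finite \<Rightarrow> 'z"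
  assumes "0 < eps" "0 \<le> delta"
  obtains \<mu> where "prob_dist \<mu>" "srec_z eps delta f z \<le> srec_z_mu eps delta \<mu> f z"
proof (cases "0 < srec_z eps delta f z")
  case False
  define \<mu> :: "'x \<times> 'y \<Rightarrow> real" where "\<mu> = (\<lambda>_. 1 / real CARD('x \<times> 'y))"
  have "prob_dist \<mu>" by (simp add: prob_dist_def \<mu>_def)
  moreover have "0 \<le> srec_z_mu eps delta \<mu> f z"
    using assms by (intro srec_z_mu_greatest)
      (auto simp: \<mu>_def srec_mu_feasible_iff srec_packing_def intro: sum_nonneg)
  ultimately show thesis
    using False that[of \<mu>] by simp
next
  case True
  show thesis
  proof (rule cheap_packings_separated[OF assms True srec_z_le])
    fix a assume a: "\<And>p. 0 \<le> a p" "\<And>p. f p \<noteq> z \<Longrightarrow> a p = 0" "0 < sum a UNIV"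
      "\<And>w. srec_packing delta f z w \<Longrightarrow> sum w rects < srec_z eps delta f z \<Longrightarrow>
         (\<Sum>p\<in>UNIV. a p * cov w p) \<le> (1 - eps) * sum a UNIV"
    show thesis
      by (rule that[OF prob_dist_normalise[OF a(1,3)] srec_z_mu_normalised_ge[OF assms a]])
  qed
qed

lemma srec_z_fibre: "srec_z eps delta f z = srec_z eps delta (\<lambda>p. f p = z) True"
  unfolding srec_z_def srec_feasible_def by simp

lemma finite_range_srec_z:
  fixes f :: "'x::finite \<times> 'y::finite \<Rightarrow> 'z"
  shows "finite (range (srec_z eps delta f))"
proof (rule finite_subset)
  show "range (srec_z eps delta f) \<subseteq> range (\<lambda>Q :: 'x \<times> 'y \<Rightarrow> bool. srec_z eps delta Q True)"
  proof (clarify)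
    fix z
    show "srec_z eps delta f z \<in> range (\<lambda>Q :: 'x \<times> 'y \<Rightarrow> bool. srec_z eps delta Q True)"
      by (subst srec_z_fibre) (rule rangeI)
  qed
qed simp

lemma srec_z_le_srec:
  fixes f :: "'x::finite \<times> 'y::finite \<Rightarrow> 'z"
  shows "srec_z eps delta f z \<le> srec eps delta f"
  unfolding srec_def by (rule cSup_upper[OF rangeI bdd_above_finite[OF finite_range_srec_z]])

lemma srec_attained:
  fixes f :: "'x::finite \<times> 'y::finite \<Rightarrow> 'z"
  obtains z where "srec eps delta f = srec_z eps delta f z"
proof -
  have "srec eps delta f \<in> range (srec_z eps delta f)"
    unfolding srec_def using finite_range_srec_z[of eps delta f]
    by (simp add: cSup_eq_Max)
  then show thesis using that by blast
qed

lemma srec_z_mu_le_srec: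
  fixes f :: "'x::finite \<times> 'y::finite \<Rightarrow> 'z"
  assumes "0 \<le> eps" "0 \<le> delta" "prob_dist \<mu>"
  shows "srec_z_mu eps delta \<mu> f z \<le> srec eps delta f"
  using srec_z_mu_le_srec_z[OF assms(1,2)] srec_z_le_srec assms(3)
  by (meson order_trans prob_dist_def)

lemma srec_mu_le_srec:
  fixes f :: "'x::finite \<times> 'y::finite \<Rightarrow> 'z"
  assumes "0 \<le> eps" "0 \<le> delta" "prob_dist \<mu>"
  shows "srec_mu eps delta \<mu> f \<le> srec eps delta f"
  unfolding srec_mu_def using srec_z_mu_le_srec[OF assms] by (intro cSup_least) auto

lemma srec_z_mu_le_srec_mu:
  fixes f :: "'x::finite \<times> 'y::finite \<Rightarrow> 'z"
  assumes "0 \<le> eps" "0 \<le> delta" "prob_dist \<mu>"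
  shows "srec_z_mu eps delta \<mu> f z \<le> srec_mu eps delta \<mu> f"
  unfolding srec_mu_def
  by (rule cSup_upper[OF rangeI bdd_aboveI2[OF srec_z_mu_le_srec[OF assms]]])

theorem mainTheorem3:
  fixes f :: "'x::finite \<times> 'y::finite \<Rightarrow> 'z" and eps delta :: real
  assumes "0 < eps" "eps < 1" "0 < delta" "delta < 1"
  shows "(\<exists>\<mu>. prob_dist \<mu> \<and> srec_mu eps delta \<mu> f = srec eps delta f) \<and>
         (\<forall>\<mu>. prob_dist \<mu> \<longrightarrow> srec_mu eps delta \<mu> f \<le> srec eps delta f)"
proof
  have eps: "0 < eps" and delta: "0 \<le> delta"
    using assms by simp_all
  show upper: "\<forall>\<mu>. prob_dist \<mu> \<longrightarrow> srec_mu eps delta \<mu> f \<le> srec eps delta f"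
    using srec_mu_le_srec[OF less_imp_le[OF eps] delta] by blast
  obtain z where z: "srec eps delta f = srec_z eps delta f z"
    by (rule srec_attained)
  obtain \<mu> where \<mu>: "prob_dist \<mu>" "srec_z eps delta f z \<le> srec_z_mu eps delta \<mu> f z"
    by (rule srec_z_le_srec_z_mu_for_some_dist[OF eps delta])
  have "srec eps delta f \<le> srec_mu eps delta \<mu> f"
    using z \<mu>(2) srec_z_mu_le_srec_mu[OF less_imp_le[OF eps] delta \<mu>(1), of f z] by linarith
  with upper \<mu>(1) show "\<exists>\<mu>. prob_dist \<mu> \<and> srec_mu eps delta \<mu> f = srec eps delta f"
    by (meson order_antisym)
qed

end
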